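(* Let $f_0(i)=i$ for all $i\ge1$. Then for every $m\ge1$ and $1\le k\le n$, $c_m(n,k)$ equals the number of words of length $n-1$ over the alphabet $\{0,1,\ldots,m+1\}$ having exactly $k-1$ letters equal to $m+1$ and avoiding $01$ (no letter $0$ is immediately followed by the letter $1$).
   Context: For $m\ge 1$, $f_m$ is the invert transform of $f_{m-1}$, i.e. $f_m(n)=f_{m-1}(n)+\sum_{i=1}^{n-1}f_{m-1}(i)f_m(n-i)$ for $n\ge1$. For $m\ge1$ the numbers $c_m(n,k)$, $0\le k\le n$, are defined by $c_m(0,0)=1$, $c_m(n,0)=0$ for $n\ge1$, and $c_m(n,k)=\sum_{i=1}^{n-k+1}f_{m-1}(i)\,c_m(n-i,k-1)$ for $1\le k\le n$. Words may be empty. *)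

theory Defs
  imports Main
begin

text \<open>Invert transform of a sequence g (indices n \<ge> 1; value at 0 is irrelevant, set to 0):
  h(n) = g(n) + sum_{i=1}^{n-1} g(i) h(n-i).\<close>
fun invert :: "(nat \<Rightarrow> nat) \<Rightarrow> nat \<Rightarrow> nat" where
  "invert g n = (if n = 0 then 0
     else g n + (\<Sum>i\<in>{1..n-1}. g i * invert g (n - i)))"

definition fseq :: "(nat \<Rightarrow> nat) \<Rightarrow> nat \<Rightarrow> nat \<Rightarrow> nat" where
  "fseq f0 m = (invert ^^ m) f0"

fun cnum :: "(nat \<Rightarrow> nat) \<Rightarrow> nat \<Rightarrow> nat \<Rightarrow> nat \<Rightarrow> nat" where
  "cnum f0 m n 0 = (if n = 0 then 1 else 0)"
| "cnum f0 m n (Suc k) = (\<Sum>i\<in>{1..n-k}. fseq f0 (m - 1) i * cnum f0 m (n - i) k)"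

definition avoids01 :: "nat list \<Rightarrow> bool" where
  "avoids01 w \<longleftrightarrow> (\<forall>j. Suc j < length w \<longrightarrow> \<not> (w ! j = 0 \<and> w ! Suc j = 1))"

end

theory Submission
  imports Defs "HOL-Computational_Algebra.Formal_Power_Series"
begin

(* Write f for f_{m-1}, the (m-1)-fold invert transform of the identity. The invert transform
   maps a generating function G to G/(1 - G); starting from x/(1 - x)^2 this gives
   f(x) = x/(1 - (m+1)x + x^2), i.e. f(n+2) + f(n) = (m+1) f(n+1) with f(1) = 1, f(2) = m+1.
   The number a_l of 01-avoiding words of length l over {0..m} obeys the same recurrence:
   prepending one of the m+1 letters to an avoiding word of length l+1 yields every avoiding
   word of length l+2, plus the words 01v. Hence f(l+1) = a_l. Cutting a word over {0..m+1} at
   its first letter m+1, which can neither end nor start a factor 01, then shows that the word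
   counts satisfy the convolution recursion defining c_m(n,k). *)

unbundle fps_syntax

lemma avoids01_simps [simp]:
  "avoids01 []"
  "avoids01 [x]"
  "avoids01 (x # y # w) \<longleftrightarrow> \<not> (x = 0 \<and> y = 1) \<and> avoids01 (y # w)"
  unfolding avoids01_def by (auto simp: All_less_Suc2 nth_Cons')

lemma avoids01_Cons_if_not_0: "x \<noteq> 0 \<Longrightarrow> avoids01 (x # w) \<longleftrightarrow> avoids01 w"
  by (cases w) auto

lemma avoids01_ConsD: "avoids01 (x # w) \<Longrightarrow> avoids01 w"
  by (cases w) auto

lemma avoids01_snoc_if_not_1: "x \<noteq> 1 \<Longrightarrow> avoids01 (w @ [x]) \<longleftrightarrow> avoids01 w"
  by (induction w rule: induct_list012) auto

lemma avoids01_append_Cons: "avoids01 (u @ x # v) \<longleftrightarrow> avoids01 (u @ [x]) \<and> avoids01 (x # v)"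
  by (induction u rule: induct_list012) auto

lemma avoids01_append_separator:
  "x \<notin> {0, 1} \<Longrightarrow> avoids01 (u @ x # v) \<longleftrightarrow> avoids01 u \<and> avoids01 v"
  by (subst avoids01_append_Cons) (simp add: avoids01_Cons_if_not_0 avoids01_snoc_if_not_1)

definition avoiding_words :: "nat set \<Rightarrow> nat \<Rightarrow> nat list set" where
  "avoiding_words A l = {w. length w = l \<and> set w \<subseteq> A \<and> avoids01 w}"

lemma finite_avoiding_words: "finite A \<Longrightarrow> finite (avoiding_words A l)"
  by (rule finite_subset[OF _ finite_lists_length_eq[of A l]]) (auto simp: avoiding_words_def)

lemma card_avoiding_words_0: "card (avoiding_words A 0) = 1"
proof -
  have "avoiding_words A 0 = {[]}"
    by (auto simp: avoiding_words_def)
  then show ?thesis by simp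
qed

lemma card_avoiding_words_1: "card (avoiding_words A 1) = card A"
proof -
  have "avoiding_words A 1 = (\<lambda>x. [x]) ` A"
    by (auto simp: avoiding_words_def length_Suc_conv)
  then show ?thesis by (simp add: card_image inj_on_def)
qed

lemma card_avoiding_words_rec:
  assumes A: "finite A" "0 \<in> A" "1 \<in> A"
  shows "card (avoiding_words A (l + 2)) + card (avoiding_words A l)
           = card A * card (avoiding_words A (l + 1))"
proof -
  let ?prepend = "(\<lambda>(x, w). x # w) ` (A \<times> avoiding_words A (l + 1))"
  let ?bad = "(\<lambda>v. 0 # 1 # v) ` avoiding_words A l"
  have "?prepend = avoiding_words A (l + 2) \<union> ?bad"
  proof (intro equalityI subsetI)
    fix z assume "z \<in> ?prepend"
    then obtain x w where z: "z = x # w" and "x \<in> A" and w: "w \<in> avoiding_words A (l + 1)"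
      by auto
    then show "z \<in> avoiding_words A (l + 2) \<union> ?bad"
      by (cases w) (auto simp: avoiding_words_def avoids01_Cons_if_not_0)
  next
    fix z assume "z \<in> avoiding_words A (l + 2) \<union> ?bad"
    then show "z \<in> ?prepend"
    proof
      assume "z \<in> avoiding_words A (l + 2)"
      then obtain x w where "z = x # w" "x \<in> A" "w \<in> avoiding_words A (l + 1)"
        by (cases z) (auto simp: avoiding_words_def dest: avoids01_ConsD)
      then show ?thesis by auto
    next
      assume "z \<in> ?bad"
      then obtain v where z: "z = 0 # 1 # v" and "v \<in> avoiding_words A l" by auto
      then have "1 # v \<in> avoiding_words A (l + 1)"
        using A by (auto simp: avoiding_words_def avoids01_Cons_if_not_0)
      then show ?thesis
        unfolding z using A by (intro image_eqI[where x = "(0, 1 # v)"]) auto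
    qed
  qed
  moreover have "avoiding_words A (l + 2) \<inter> ?bad = {}"
    by (auto simp: avoiding_words_def)
  ultimately have "card ?prepend = card (avoiding_words A (l + 2)) + card ?bad"
    using A by (simp add: card_Un_disjoint finite_avoiding_words)
  moreover have "card ?prepend = card A * card (avoiding_words A (l + 1))"
    by (subst card_image) (auto simp: inj_on_def card_cartesian_product)
  moreover have "card ?bad = card (avoiding_words A l)"
    by (subst card_image) (auto simp: inj_on_def)
  ultimately show ?thesis by simp
qed

definition marked_words :: "nat set \<Rightarrow> nat \<Rightarrow> nat \<Rightarrow> nat \<Rightarrow> nat list set" where
  "marked_words A c L j = {w \<in> avoiding_words A L. length (filter (\<lambda>x. x = c) w) = j}"

lemma finite_marked_words: "finite A \<Longrightarrow> finite (marked_words A c L j)"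
  by (simp add: marked_words_def finite_avoiding_words)

lemma marked_words_0: "marked_words A c L 0 = avoiding_words (A - {c}) L"
  by (auto simp: marked_words_def avoiding_words_def filter_empty_conv)

lemma marked_words_eq_empty:
  assumes "L < j" shows "marked_words A c L j = {}"
proof -
  have "j \<le> L" if "w \<in> marked_words A c L j" for w
    using that length_filter_le[of "\<lambda>x. x = c" w] by (auto simp: marked_words_def avoiding_words_def)
  then show ?thesis using assms by fastforce
qed

lemma append_Cons_eq_first_occurrence:
  "c \<notin> set u \<Longrightarrow> c \<notin> set u' \<Longrightarrow> u @ c # v = u' @ c # v' \<Longrightarrow> u = u' \<and> v = v'"
proof (induction u arbitrary: u')
  case Nil then show ?case by (cases u') auto
next
  case (Cons a u) then show ?case by (cases u') auto
qed

lemma card_marked_words_Suc: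
  assumes A: "finite A" "c \<in> A" "c \<notin> {0, 1}"
  shows "card (marked_words A c L (Suc j))
           = (\<Sum>l<L. card (avoiding_words (A - {c}) l) * card (marked_words A c (L - 1 - l) j))"
proof -
  let ?S = "SIGMA l:{..<L}. avoiding_words (A - {c}) l \<times> marked_words A c (L - 1 - l) j"
  let ?glue = "\<lambda>(l, u, v). u @ c # v"
  have inj: "inj_on ?glue ?S"
    by (rule inj_onI) (auto simp: avoiding_words_def dest: append_Cons_eq_first_occurrence)
  have image: "?glue ` ?S = marked_words A c L (Suc j)"
  proof (intro equalityI subsetI)
    fix w assume "w \<in> ?glue ` ?S"
    then obtain l u v where "l < L" and u: "u \<in> avoiding_words (A - {c}) l"
      and "v \<in> marked_words A c (L - 1 - l) j" "w = u @ c # v"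
      by auto
    moreover have "filter (\<lambda>x. x = c) u = []"
      using u by (auto simp: avoiding_words_def filter_empty_conv)
    ultimately show "w \<in> marked_words A c L (Suc j)"
      using A by (auto simp: marked_words_def avoiding_words_def avoids01_append_separator)
  next
    fix w assume w: "w \<in> marked_words A c L (Suc j)"
    then have "filter (\<lambda>x. x = c) w \<noteq> []"
      by (auto simp: marked_words_def)
    then have "c \<in> set w"
      by (metis (mono_tags) filter_False)
    then obtain u v where uv: "w = u @ c # v" "c \<notin> set u"
      by (metis split_list_first)
    moreover have "filter (\<lambda>x. x = c) u = []"
      using uv(2) by (auto simp: filter_empty_conv)
    ultimately have "(length u, u, v) \<in> ?S"
      using w A by (auto simp: marked_words_def avoiding_words_def avoids01_append_separator)
    then show "w \<in> ?glue ` ?S"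
      using uv by force
  qed
  have "card (marked_words A c L (Suc j)) = card ?S"
    unfolding image[symmetric] by (rule card_image[OF inj])
  also have "\<dots> = (\<Sum>l<L. card (avoiding_words (A - {c}) l \<times> marked_words A c (L - 1 - l) j))"
    using A by (intro card_SigmaI) (auto intro!: finite_avoiding_words finite_marked_words)
  also have "\<dots> = (\<Sum>l<L. card (avoiding_words (A - {c}) l) * card (marked_words A c (L - 1 - l) j))"
    by (simp only: card_cartesian_product)
  finally show ?thesis .
qed

lemma second_order_recurrence_unique:
  fixes u v :: "nat \<Rightarrow> nat"
  assumes u: "\<And>n. u (n + 2) + u n = c * u (n + 1)"
    and v: "\<And>n. v (n + 2) + v n = c * v (n + 1)"
    and "u 0 = v 0" "u 1 = v 1"
  shows "u n = v n"
proof -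
  have "u n = v n \<and> u (n + 1) = v (n + 1)"
  proof (induction n)
    case (Suc n)
    then show ?case using u[of n] v[of n] by (simp add: algebra_simps)
  qed (use assms in simp)
  then show ?thesis ..
qed

definition fps_of_seq :: "(nat \<Rightarrow> nat) \<Rightarrow> int fps" where
  "fps_of_seq g = Abs_fps (\<lambda>n. int (g n))"

lemma fps_mult_quadratic_nth:
  fixes f :: "int fps"
  shows "(f * (1 - of_nat c * fps_X + fps_X ^ 2)) $ n =
     f $ n - (if n < 1 then 0 else of_nat c * f $ (n - 1)) + (if n < 2 then 0 else f $ (n - 2))"
proof -
  have "f * (1 - of_nat c * fps_X + fps_X ^ 2)
          = f - fps_const (of_nat c) * (f * fps_X ^ 1) + f * fps_X ^ 2"
    by (simp add: algebra_simps fps_of_nat)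
  then show ?thesis
    by (simp only: fps_add_nth fps_sub_nth fps_mult_left_const_nth fps_X_power_mult_right_nth) simp
qed

declare invert.simps [simp del]

lemma invert_0 [simp]: "invert g 0 = 0"
  by (simp add: invert.simps)

lemma invert_pos: "n > 0 \<Longrightarrow> invert g n = g n + (\<Sum>i\<in>{1..n-1}. g i * invert g (n - i))"
  by (simp add: invert.simps)

lemma fps_of_seq_invert:
  assumes "g 0 = 0"
  shows "fps_of_seq (invert g) = fps_of_seq g + fps_of_seq g * fps_of_seq (invert g)"
proof (rule fps_ext)
  fix n
  show "fps_of_seq (invert g) $ n = (fps_of_seq g + fps_of_seq g * fps_of_seq (invert g)) $ n"
  proof (cases "n = 0")
    case True
    then show ?thesis by (simp add: fps_of_seq_def assms)
  next
    case False
    have "(fps_of_seq g * fps_of_seq (invert g)) $ n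
            = (\<Sum>i=0..n. int (g i) * int (invert g (n - i)))"
      by (simp add: fps_mult_nth fps_of_seq_def)
    also have "\<dots> = (\<Sum>i\<in>{1..n-1}. int (g i) * int (invert g (n - i)))"
      using False assms by (intro sum.mono_neutral_right) (auto simp: not_less_eq_eq)
    also have "\<dots> = int (invert g n) - int (g n)"
      using False by (simp add: invert_pos)
    finally show ?thesis
      by (simp add: fps_of_seq_def)
  qed
qed

lemma fseq_0 [simp]: "fseq f0 0 = f0"
  by (simp add: fseq_def)

lemma fseq_Suc: "fseq f0 (Suc j) = invert (fseq f0 j)"
  by (simp add: fseq_def)

lemma fseq_id_at_0: "fseq (\<lambda>i. i) j 0 = 0"
  by (cases j) (simp_all add: fseq_Suc)

lemma fps_of_seq_fseq_id:
  "fps_of_seq (fseq (\<lambda>i. i) j) * (1 - of_nat (j + 2) * fps_X + fps_X ^ 2) = fps_X"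
proof (induction j)
  case 0
  show ?case
  proof (rule fps_ext)
    fix n
    show "(fps_of_seq (fseq (\<lambda>i. i) 0) * (1 - of_nat (0 + 2) * fps_X + fps_X ^ 2)) $ n = fps_X $ n"
      unfolding fps_mult_quadratic_nth by (auto simp: fps_of_seq_def)
  qed
next
  case (Suc j)
  let ?G = "fps_of_seq (fseq (\<lambda>i. i) j)" and ?H = "fps_of_seq (fseq (\<lambda>i. i) (Suc j))"
  let ?D = "1 - of_nat (j + 2) * fps_X + fps_X ^ 2 :: int fps"
  have H: "?H = ?G + ?G * ?H"
    unfolding fseq_Suc by (rule fps_of_seq_invert) (rule fseq_id_at_0)
  have "?H * (?D - fps_X) = ?H * ?D - ?H * (?G * ?D)"
    using Suc by (simp add: algebra_simps)
  also have "\<dots> = (?H - ?G * ?H) * ?D"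
    by (simp add: algebra_simps)
  also have "?H - ?G * ?H = ?G"
    using H by (simp add: algebra_simps)
  finally have "?H * (?D - fps_X) = fps_X"
    using Suc by simp
  moreover have "?D - fps_X = 1 - of_nat (Suc j + 2) * fps_X + fps_X ^ 2"
    by (simp add: algebra_simps)
  ultimately show ?case
    by metis
qed

lemma fseq_id_rec:
  "fseq (\<lambda>i. i) j (n + 2) + fseq (\<lambda>i. i) j n = (j + 2) * fseq (\<lambda>i. i) j (n + 1)"
proof -
  have "(fps_of_seq (fseq (\<lambda>i. i) j) * (1 - of_nat (j + 2) * fps_X + fps_X ^ 2)) $ (n + 2)
          = fps_X $ (n + 2)"
    by (simp only: fps_of_seq_fseq_id)
  then have "int (fseq (\<lambda>i. i) j (n + 2)) + int (fseq (\<lambda>i. i) j n)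
               = int (j + 2) * int (fseq (\<lambda>i. i) j (n + 1))"
    unfolding fps_mult_quadratic_nth by (simp add: fps_of_seq_def)
  then show ?thesis
    unfolding of_nat_add[symmetric] of_nat_mult[symmetric] of_nat_eq_iff .
qed

lemma fseq_id_at_1: "fseq (\<lambda>i. i) j 1 = 1"
proof -
  have "(fps_of_seq (fseq (\<lambda>i. i) j) * (1 - of_nat (j + 2) * fps_X + fps_X ^ 2)) $ 1 = fps_X $ 1"
    by (simp only: fps_of_seq_fseq_id)
  then show ?thesis
    unfolding fps_mult_quadratic_nth by (simp add: fps_of_seq_def fseq_id_at_0)
qed

lemma fseq_id_eq_card_avoiding_words:
  assumes "m \<ge> 1"
  shows "fseq (\<lambda>i. i) (m - 1) (Suc l) = card (avoiding_words {0..m} l)"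
proof -
  let ?f = "fseq (\<lambda>i. i) (m - 1)" and ?a = "\<lambda>l. card (avoiding_words {0..m} l)"
  show ?thesis
  proof (rule second_order_recurrence_unique[where u = "\<lambda>l. ?f (Suc l)" and v = ?a and c = "m + 1"])
    fix n
    show "?f (Suc (n + 2)) + ?f (Suc n) = (m + 1) * ?f (Suc (n + 1))"
      using fseq_id_rec[of "m - 1" "Suc n"] assms by simp
    show "?a (n + 2) + ?a n = (m + 1) * ?a (n + 1)"
      using card_avoiding_words_rec[of "{0..m}" n] assms by simp
  next
    show "?f (Suc 0) = ?a 0"
      using fseq_id_at_1[of "m - 1"] by (simp add: card_avoiding_words_0)
    show "?f (Suc 1) = ?a 1"
      using fseq_id_rec[of "m - 1" 0] fseq_id_at_0 fseq_id_at_1 card_avoiding_words_1[of "{0..m}"]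
        assms by simp
  qed
qed

lemma cnum_id_eq_card_marked_words:
  assumes "m \<ge> 1" and "Suc k \<le> n"
  shows "cnum (\<lambda>i. i) m n (Suc k) = card (marked_words {0..m + 1} (m + 1) (n - 1) k)"
proof -
  have alphabet: "{0..m + 1} - {m + 1} = {0..m}"
    by auto
  from assms(2) show ?thesis
  proof (induction k arbitrary: n)
    case 0
    let ?f = "fseq (\<lambda>i. i) (m - 1)"
    have "cnum (\<lambda>i. i) m n (Suc 0) = (\<Sum>i\<in>{1..n}. ?f i * (if n - i = 0 then 1 else 0))"
      by simp
    also have "\<dots> = (\<Sum>i\<in>{1..n}. if i = n then ?f n else 0)"
      by (rule sum.cong) auto
    also have "\<dots> = card (avoiding_words {0..m} (n - 1))"
      using 0 fseq_id_eq_card_avoiding_words[OF assms(1), of "n - 1"] by simp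
    finally show ?case
      by (simp only: marked_words_0 alphabet)
  next
    case (Suc k)
    let ?f = "fseq (\<lambda>i. i) (m - 1)" and ?a = "\<lambda>l. card (avoiding_words {0..m} l)"
      and ?N = "\<lambda>L. card (marked_words {0..m + 1} (m + 1) L k)"
    have "cnum (\<lambda>i. i) m n (Suc (Suc k))
            = (\<Sum>i\<in>{1..n - Suc k}. ?f i * cnum (\<lambda>i. i) m (n - i) (Suc k))"
      by simp
    also have "\<dots> = (\<Sum>i\<in>{1..n - Suc k}. ?a (i - 1) * ?N (n - i - 1))"
    proof (rule sum.cong)
      fix i assume i: "i \<in> {1..n - Suc k}"
      then have "cnum (\<lambda>i. i) m (n - i) (Suc k) = ?N (n - i - 1)"
        by (intro Suc.IH) auto
      moreover have "?f i = ?a (i - 1)"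
        using fseq_id_eq_card_avoiding_words[OF assms(1), of "i - 1"] i by simp
      ultimately show "?f i * cnum (\<lambda>i. i) m (n - i) (Suc k) = ?a (i - 1) * ?N (n - i - 1)"
        by simp
    qed simp
    also have "\<dots> = (\<Sum>l<n - Suc k. ?a l * ?N (n - 1 - 1 - l))"
      unfolding One_nat_def sum.atLeast1_atMost_eq by (simp add: diff_diff_add)
    also have "\<dots> = (\<Sum>l<n - 1. ?a l * ?N (n - 1 - 1 - l))"
      using Suc.prems by (intro sum.mono_neutral_left) (auto simp: marked_words_eq_empty)
    also have "\<dots> = card (marked_words {0..m + 1} (m + 1) (n - 1) (Suc k))"
      using card_marked_words_Suc[of "{0..m + 1}" "m + 1" "n - 1" k] assms(1)
      unfolding alphabet by simp
    finally show ?case .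
  qed
qed

theorem corollary25:
  fixes m n k :: nat
  assumes "m \<ge> 1" and "1 \<le> k" and "k \<le> n"
  shows "cnum (\<lambda>i. i) m n k =
    card {w :: nat list. length w = n - 1 \<and> set w \<subseteq> {0..m+1}
            \<and> length (filter (\<lambda>x. x = m + 1) w) = k - 1 \<and> avoids01 w}"
proof -
  obtain k' where k: "k = Suc k'"
    using assms(2) by (cases k) auto
  have "cnum (\<lambda>i. i) m n k = card (marked_words {0..m + 1} (m + 1) (n - 1) k')"
    using cnum_id_eq_card_marked_words[OF assms(1)] assms(3) k by simp
  also have "marked_words {0..m + 1} (m + 1) (n - 1) k' = {w :: nat list. length w = n - 1
      \<and> set w \<subseteq> {0..m+1} \<and> length (filter (\<lambda>x. x = m + 1) w) = k - 1 \<and> avoids01 w}"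
    by (auto simp: marked_words_def avoiding_words_def k)
  finally show ?thesis .
qed

end
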